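(* Let $S\subset\mathbb{R}^2$, $s=(s_1,s_2)\in S$, and let $\ell(x,\xi)=\rho(\|x-\xi\|)$, where $\rho:[0,\infty)\to(0,1)$ is continuously differentiable. Consider $\xi_1,\dots,\xi_N\in\mathbb{R}^2$, $\xi_k=(\xi_{k,1},\xi_{k,2})$, constrained so that $\|\xi_k-s\|=\|\xi_m-s\|>0$ for all $k,m\in\{1,\dots,N\}$. Let $\theta_k=\mathrm{atan2}(\xi_{k,2}-s_2,\xi_{k,1}-s_1)$ and $r=\|\xi_1-s\|$, and let $$I(s;\xi_{1:N})=\sum_{k=1}^N\frac{\nabla_s\ell(s,\xi_k)\nabla_s\ell(s,\xi_k)^\top}{\ell(s,\xi_k)[1-\ell(s,\xi_k)]}$$ be the Fisher information matrix for $s$ from independent binary measurements at $\xi_1,\dots,\xi_N$ with detection probabilities $\ell(s,\xi_k)$. Then: (1) For any fixed $r>0$, $\det I(s;\xi_{1:N})$ is maximised (over $\theta_1,\dots,\theta_N$) if and only if $\sum_{k=1}^N\cos(2\theta_k)=0$ and $\sum_{k=1}^N\sin(2\theta_k)=0$. (2) Under the additional constraint $r\in[r_1,r_2]$ for some $0<r_1\le r_2$, for any fixed $\theta_1,\dots,\theta_N$, $\det I(s;\xi_{1:N})$ is maximised (over $r$) if and only if $r\in\operatorname*{argmax}_{x\in[r_1,r_2]}\frac{\rho'(x)^2}{\rho(x)[1-\rho(x)]}$. (3) Optimising jointly over $\theta_1,\dots,\theta_N\in\mathbb{R}$ and $r\in[r_1,r_2]$, $\det I(s;\xi_{1:N})$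 is maximised if and only if both $\sum_{k=1}^N\cos(2\theta_k)=\sum_{k=1}^N\sin(2\theta_k)=0$ and $r\in\operatorname*{argmax}_{x\in[r_1,r_2]}\frac{\rho'(x)^2}{\rho(x)[1-\rho(x)]}$.
   Context: Here $\xi_k=s+r(\cos\theta_k,\sin\theta_k)$, so the configuration is parametrised by $r$ and $\theta_1,\dots,\theta_N$. *)

theory Defs
  imports "HOL-Analysis.Analysis"
begin

definition ell :: "(real \<Rightarrow> real) \<Rightarrow> real^2 \<Rightarrow> real^2 \<Rightarrow> real" where
  "ell \<rho> x \<xi> = \<rho> (norm (x - \<xi>))"

definition grad :: "(real^2 \<Rightarrow> real) \<Rightarrow> real^2 \<Rightarrow> real^2" where
  "grad f x = (THE D. GDERIV f x :> D)"

definition outer :: "real^2 \<Rightarrow> real^2^2" where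
  "outer v = (\<chi> i j. v $ i * v $ j)"

definition fisher_info :: "(real \<Rightarrow> real) \<Rightarrow> nat \<Rightarrow> real^2 \<Rightarrow> (nat \<Rightarrow> real^2) \<Rightarrow> real^2^2" where
  "fisher_info \<rho> N s \<xi> =
     (\<Sum>k\<in>{1..N}. (1 / (ell \<rho> s (\<xi> k) * (1 - ell \<rho> s (\<xi> k))))
                      *\<^sub>R outer (grad (\<lambda>x. ell \<rho> x (\<xi> k)) s))"

definition sensors :: "real^2 \<Rightarrow> real \<Rightarrow> (nat \<Rightarrow> real) \<Rightarrow> nat \<Rightarrow> real^2" where
  "sensors s r \<theta> k = s + r *\<^sub>R vector [cos (\<theta> k), sin (\<theta> k)]"

definition detI :: "(real \<Rightarrow> real) \<Rightarrow> nat \<Rightarrow> real^2 \<Rightarrow> real \<Rightarrow> (nat \<Rightarrow> real) \<Rightarrow> real" where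
  "detI \<rho> N s r \<theta> = det (fisher_info \<rho> N s (sensors s r \<theta>))"

definition argmax_on :: "(real \<Rightarrow> real) \<Rightarrow> real set \<Rightarrow> real set" where
  "argmax_on f A = {x \<in> A. \<forall>y\<in>A. f y \<le> f x}"

end

theory Submission
  imports Defs
begin

text \<open>A sensor at distance \<open>r\<close> from \<open>s\<close> in direction \<open>u\<^sub>k = (cos \<theta>\<^sub>k, sin \<theta>\<^sub>k)\<close>
contributes \<open>\<nabla>\<^sub>s\<ell> = -\<rho>'(r) u\<^sub>k\<close>, so the Fisher information is \<open>w(r) \<Sum>\<^sub>k u\<^sub>k u\<^sub>k\<^sup>T\<close> with
\<open>w = \<rho>'\<^sup>2 / (\<rho>(1 - \<rho>))\<close>, and \<open>det I = w(r)\<^sup>2 G(\<theta>)\<close> where \<open>G\<close> is the Gram determinant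
of the directions. By the double-angle formulas
\<open>4 G(\<theta>) = N\<^sup>2 - (\<Sum>\<^sub>k cos 2\<theta>\<^sub>k)\<^sup>2 - (\<Sum>\<^sub>k sin 2\<theta>\<^sub>k)\<^sup>2\<close>, whose maximum \<open>N\<^sup>2\<close> is attained by
equally spaced angles (roots of unity). The determinant thus factors into a radial and an
angular part which are maximised independently.\<close>

lemma gderiv_unique:
  assumes "GDERIV f x :> D" and "GDERIV f x :> D'"
  shows "D = D'"
proof -
  have "(\<lambda>h. h \<bullet> D) = (\<lambda>h. h \<bullet> D')"
    using assms unfolding gderiv_def by (rule has_derivative_unique)
  then show ?thesis
    by (metis vector_eq_ldot)
qed

lemma grad_eqI: "GDERIV f x :> D \<Longrightarrow> grad f x = D"
  unfolding grad_def using gderiv_unique by blast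

lemma grad_ell:
  assumes "(\<rho> has_real_derivative d) (at (norm (x - \<xi>)))" and "x \<noteq> \<xi>"
  shows "grad (\<lambda>y. ell \<rho> y \<xi>) x = d *\<^sub>R sgn (x - \<xi>)"
proof -
  have "(norm has_derivative (\<lambda>h. h \<bullet> sgn (x - \<xi>))) (at (x - \<xi>))"
    using assms(2) by (intro has_derivative_norm) simp
  then have "GDERIV (\<lambda>y. norm (y - \<xi>)) x :> sgn (x - \<xi>)"
    unfolding gderiv_def
    by (auto intro!: derivative_eq_intros has_derivative_compose[of "\<lambda>y. y - \<xi>" _ _ _ norm, simplified])
  then show ?thesis
    unfolding ell_def using assms(1) by (intro grad_eqI GDERIV_DERIV_compose)
qed

definition direction :: "real \<Rightarrow> real^2" where
  "direction t = vector [cos t, sin t]"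

lemma direction_nth [simp]: "direction t $ 1 = cos t" "direction t $ 2 = sin t"
  unfolding direction_def by simp_all

lemma norm_direction [simp]: "norm (direction t) = 1"
  unfolding direction_def norm_eq_sqrt_inner inner_vec_def by (simp add: sum_2)

lemma sensors_direction: "sensors s r \<theta> k = s + r *\<^sub>R direction (\<theta> k)"
  unfolding sensors_def direction_def ..

lemma ell_sensors: "r > 0 \<Longrightarrow> ell \<rho> s (sensors s r \<theta> k) = \<rho> r"
  unfolding ell_def sensors_direction by simp

lemma grad_ell_sensors:
  assumes "(\<rho> has_real_derivative d) (at r)" and "r > 0"
  shows "grad (\<lambda>x. ell \<rho> x (sensors s r \<theta> k)) s = - d *\<^sub>R direction (\<theta> k)"
proof -
  have diff: "s - sensors s r \<theta> k = (- r) *\<^sub>R direction (\<theta> k)"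
    unfolding sensors_direction by simp
  have "norm (s - sensors s r \<theta> k) = r"
    unfolding diff using assms(2) by simp
  moreover have "sgn (s - sensors s r \<theta> k) = - direction (\<theta> k)"
    unfolding diff using assms(2) by (simp add: sgn_div_norm)
  ultimately show ?thesis
    using assms by (subst grad_ell) auto
qed

lemma outer_scaleR: "outer (c *\<^sub>R v) = c\<^sup>2 *\<^sub>R outer v"
  unfolding outer_def by (vector power2_eq_square)

lemma outer_minus: "outer (- v) = outer v"
  unfolding outer_def by vector

definition fisher_weight :: "(real \<Rightarrow> real) \<Rightarrow> (real \<Rightarrow> real) \<Rightarrow> real \<Rightarrow> real" where
  "fisher_weight \<rho> \<rho>' x = (\<rho>' x)\<^sup>2 / (\<rho> x * (1 - \<rho> x))"

lemma fisher_weight_nonneg: "0 < \<rho> x \<Longrightarrow> \<rho> x < 1 \<Longrightarrow> 0 \<le> fisher_weight \<rho> \<rho>' x"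
  unfolding fisher_weight_def by simp

lemma fisher_weight_pos:
  "0 < \<rho> x \<Longrightarrow> \<rho> x < 1 \<Longrightarrow> \<rho>' x \<noteq> 0 \<Longrightarrow> 0 < fisher_weight \<rho> \<rho>' x"
  unfolding fisher_weight_def by simp

lemma fisher_info_sensors:
  assumes "(\<rho> has_real_derivative \<rho>' r) (at r)" and "r > 0"
  shows "fisher_info \<rho> N s (sensors s r \<theta>)
           = fisher_weight \<rho> \<rho>' r *\<^sub>R (\<Sum>k\<in>{1..N}. outer (direction (\<theta> k)))"
  unfolding fisher_info_def fisher_weight_def scaleR_sum_right
  using assms by (simp add: grad_ell_sensors ell_sensors outer_minus outer_scaleR)

definition direction_gram :: "nat \<Rightarrow> (nat \<Rightarrow> real) \<Rightarrow> real" where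
  "direction_gram N \<theta> = det (\<Sum>k\<in>{1..N}. outer (direction (\<theta> k)))"

lemma det_scaleR_2: "det (c *\<^sub>R A :: real^2^2) = c\<^sup>2 * det A"
  by (simp add: det_2 power2_eq_square algebra_simps)

lemma detI_eq:
  assumes "(\<rho> has_real_derivative \<rho>' r) (at r)" and "r > 0"
  shows "detI \<rho> N s r \<theta> = (fisher_weight \<rho> \<rho>' r)\<^sup>2 * direction_gram N \<theta>"
  using fisher_info_sensors[of \<rho> \<rho>' r N s \<theta>] assms
  by (simp add: detI_def direction_gram_def det_scaleR_2)

lemma det_sum_outer:
  "det (\<Sum>k\<in>A. outer (v k)) =
     (\<Sum>k\<in>A. (v k $ 1)\<^sup>2) * (\<Sum>k\<in>A. (v k $ 2)\<^sup>2) - (\<Sum>k\<in>A. v k $ 1 * v k $ 2)\<^sup>2"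
  by (simp add: det_2 outer_def power2_eq_square mult.commute)

lemma lagrange_identity:
  fixes a b :: "'i \<Rightarrow> 'a::comm_ring_1"
  shows "2 * ((\<Sum>k\<in>A. (a k)\<^sup>2) * (\<Sum>k\<in>A. (b k)\<^sup>2) - (\<Sum>k\<in>A. a k * b k)\<^sup>2)
           = (\<Sum>k\<in>A. \<Sum>m\<in>A. (a k * b m - a m * b k)\<^sup>2)"
proof -
  have expand: "(a k * b m - a m * b k)\<^sup>2
      = (a k)\<^sup>2 * (b m)\<^sup>2 + (a m)\<^sup>2 * (b k)\<^sup>2 - 2 * ((a k * b k) * (a m * b m))" for k m
    by (simp add: power2_eq_square algebra_simps)
  show ?thesis
    unfolding expand sum_subtractf sum.distrib sum_distrib_left[symmetric] sum_distrib_right[symmetric]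
    by (simp add: power2_eq_square algebra_simps sum.swap[of "\<lambda>k m. (a m)\<^sup>2 * (b k)\<^sup>2"])
qed

lemma direction_gram_sin_diff:
  "2 * direction_gram N \<theta> = (\<Sum>k\<in>{1..N}. \<Sum>m\<in>{1..N}. (sin (\<theta> m - \<theta> k))\<^sup>2)"
  unfolding direction_gram_def det_sum_outer lagrange_identity
  by (simp add: sin_diff algebra_simps)

lemma direction_gram_pos:
  assumes "k \<in> {1..N}" and "m \<in> {1..N}" and "sin (\<theta> k - \<theta> m) \<noteq> 0"
  shows "0 < direction_gram N \<theta>"
proof -
  have "0 < (\<Sum>k'\<in>{1..N}. (sin (\<theta> k' - \<theta> m))\<^sup>2)"
    using assms by (intro sum_pos2[of _ k]) auto
  also have "\<dots> \<le> (\<Sum>m'\<in>{1..N}. \<Sum>k'\<in>{1..N}. (sin (\<theta> k' - \<theta> m'))\<^sup>2)"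
    using assms by (intro member_le_sum sum_nonneg) auto
  finally show ?thesis
    using direction_gram_sin_diff[of N \<theta>] by simp
qed

lemma direction_gram_double_angle:
  "4 * direction_gram N \<theta> =
     (real N)\<^sup>2 - (\<Sum>k\<in>{1..N}. cos (2 * \<theta> k))\<^sup>2 - (\<Sum>k\<in>{1..N}. sin (2 * \<theta> k))\<^sup>2"
proof -
  let ?C = "\<Sum>k\<in>{1..N}. cos (2 * \<theta> k)" and ?S = "\<Sum>k\<in>{1..N}. sin (2 * \<theta> k)"
  have cos_sq: "(cos t)\<^sup>2 = (1 + cos (2 * t)) / 2" for t :: real
    by (simp add: cos_double_cos)
  have sin_sq: "(sin t)\<^sup>2 = (1 - cos (2 * t)) / 2" for t :: real
    by (simp add: cos_double_sin)
  have cos_sin: "cos t * sin t = sin (2 * t) / 2" for t :: real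
    by (simp add: sin_double)
  have "direction_gram N \<theta> = ((real N + ?C) / 2) * ((real N - ?C) / 2) - (?S / 2)\<^sup>2"
    unfolding direction_gram_def det_sum_outer direction_nth cos_sq sin_sq cos_sin
    by (simp add: sum.distrib sum_subtractf sum_divide_distrib[symmetric])
  then show ?thesis
    by (simp add: power2_eq_square algebra_simps)
qed

lemma direction_gram_le: "direction_gram N \<theta> \<le> (real N)\<^sup>2 / 4"
  using direction_gram_double_angle[of N \<theta>]
    zero_le_power2[of "\<Sum>k\<in>{1..N}. cos (2 * \<theta> k)"] zero_le_power2[of "\<Sum>k\<in>{1..N}. sin (2 * \<theta> k)"]
  by linarith

lemma direction_gram_eq_max_iff:
  "direction_gram N \<theta> = (real N)\<^sup>2 / 4 \<longleftrightarrow>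
     (\<Sum>k\<in>{1..N}. cos (2 * \<theta> k)) = 0 \<and> (\<Sum>k\<in>{1..N}. sin (2 * \<theta> k)) = 0"
proof -
  have "direction_gram N \<theta> = (real N)\<^sup>2 / 4 \<longleftrightarrow>
      (\<Sum>k\<in>{1..N}. cos (2 * \<theta> k))\<^sup>2 + (\<Sum>k\<in>{1..N}. sin (2 * \<theta> k))\<^sup>2 = 0"
    using direction_gram_double_angle[of N \<theta>] by linarith
  then show ?thesis
    by (simp add: sum_power2_eq_zero_iff)
qed

lemma sum_cis_roots_unity:
  assumes "n > 1"
  shows "(\<Sum>k<n. cis (2 * pi * real k / real n)) = 0"
proof -
  have "bij_betw (\<lambda>k. cis (2 * pi * real k / real n)) {..<n} {z. z ^ n = 1}"
    using assms by (intro Complex.bij_betw_roots_unity) simp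
  from sum.reindex_bij_betw[OF this, of "\<lambda>z. z"] show ?thesis
    using sum_roots_unity[OF assms] by simp
qed

lemma direction_gram_equiangular:
  assumes "N > 1"
  shows "direction_gram N (\<lambda>k. pi * real (k - 1) / real N) = (real N)\<^sup>2 / 4"
proof -
  have "(\<Sum>k\<in>{1..N}. cis (2 * (pi * real (k - 1) / real N))) = 0"
    using sum_cis_roots_unity[OF assms]
    by (simp add: sum.atLeast1_atMost_eq mult.assoc times_divide_eq_right)
  then have "Re (\<Sum>k\<in>{1..N}. cis (2 * (pi * real (k - 1) / real N))) = 0"
    "Im (\<Sum>k\<in>{1..N}. cis (2 * (pi * real (k - 1) / real N))) = 0"
    by simp_all
  then show ?thesis
    unfolding direction_gram_eq_max_iff Re_sum Im_sum by simp
qed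

lemma product_maximizer_iff:
  fixes f :: "'a \<Rightarrow> real" and g :: "'b \<Rightarrow> real"
  assumes f_nonneg: "\<forall>x\<in>A. 0 \<le> f x" and f_pos: "\<exists>x\<in>A. 0 < f x"
    and g_le: "\<forall>y\<in>B. g y \<le> M" and g_max: "\<exists>y\<in>B. g y = M" and M_pos: "0 < M"
    and a: "a \<in> A" and b: "b \<in> B"
  shows "(\<forall>y\<in>B. \<forall>x\<in>A. f x * g y \<le> f a * g b) \<longleftrightarrow> g b = M \<and> (\<forall>x\<in>A. f x \<le> f a)"
proof
  assume max: "\<forall>y\<in>B. \<forall>x\<in>A. f x * g y \<le> f a * g b"
  obtain x\<^sub>0 y\<^sub>0 where x\<^sub>0: "x\<^sub>0 \<in> A" "0 < f x\<^sub>0" and y\<^sub>0: "y\<^sub>0 \<in> B" "g y\<^sub>0 = M"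
    using f_pos g_max by blast
  have "0 < f x\<^sub>0 * g y\<^sub>0"
    using x\<^sub>0 y\<^sub>0 M_pos by simp
  also have "\<dots> \<le> f a * g b"
    using max x\<^sub>0 y\<^sub>0 by blast
  finally have "f a \<noteq> 0"
    by auto
  then have fa_pos: "0 < f a"
    using f_nonneg a by force
  have "f a * M \<le> f a * g b"
    using max a y\<^sub>0 by force
  then have gb: "g b = M"
    using fa_pos g_le b by (simp add: antisym)
  have "f x \<le> f a" if "x \<in> A" for x
  proof -
    have "f x * M \<le> f a * M"
      using max that y\<^sub>0 gb by force
    then show ?thesis
      using M_pos by simp
  qed
  with gb show "g b = M \<and> (\<forall>x\<in>A. f x \<le> f a)"
    by blast
next
  assume gb: "g b = M \<and> (\<forall>x\<in>A. f x \<le> f a)"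
  show "\<forall>y\<in>B. \<forall>x\<in>A. f x * g y \<le> f a * g b"
  proof (intro ballI)
    fix x y assume "x \<in> A" "y \<in> B"
    then have "f x * g y \<le> f x * M"
      using f_nonneg g_le by (simp add: mult_left_mono)
    also have "\<dots> \<le> f a * M"
      using gb \<open>x \<in> A\<close> M_pos by (simp add: mult_right_mono)
    finally show "f x * g y \<le> f a * g b"
      using gb by simp
  qed
qed

lemma argmax_on_power2:
  assumes "\<forall>x\<in>A. 0 \<le> f x"
  shows "argmax_on (\<lambda>x. (f x)\<^sup>2) A = argmax_on f A"
  using assms unfolding argmax_on_def by (auto simp: power_mono_iff)

lemma has_real_derivative_at_within_Ici:
  assumes "(f has_real_derivative D) (at x within {a..})" and "a < x"
  shows "(f has_real_derivative D) (at x)"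
proof -
  have "at x within {a..} = at x"
    using assms(2) by (intro at_within_interior) simp
  with assms(1) show ?thesis
    by simp
qed

lemma detI_maximizer_iff:
  assumes "N > 1" and "A \<subseteq> {0<..}"
    and rho_range: "\<forall>x\<in>A. 0 < \<rho> x \<and> \<rho> x < 1"
    and rho_deriv: "\<forall>x\<in>A. (\<rho> has_real_derivative \<rho>' x) (at x)"
    and informative: "\<exists>x\<in>A. \<rho>' x \<noteq> 0" and "r \<in> A"
  shows "(\<forall>\<theta>'. \<forall>r'\<in>A. detI \<rho> N s r' \<theta>' \<le> detI \<rho> N s r \<theta>) \<longleftrightarrow>
           (\<Sum>k\<in>{1..N}. cos (2 * \<theta> k)) = 0 \<and> (\<Sum>k\<in>{1..N}. sin (2 * \<theta> k)) = 0
           \<and> r \<in> argmax_on (fisher_weight \<rho> \<rho>') A"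
proof -
  let ?w = "\<lambda>x. (fisher_weight \<rho> \<rho>' x)\<^sup>2"
  have detI: "detI \<rho> N s x \<theta>' = ?w x * direction_gram N \<theta>'" if "x \<in> A" for x \<theta>'
    using that assms(2) rho_deriv by (intro detI_eq) auto
  have w_nonneg: "\<forall>x\<in>A. 0 \<le> fisher_weight \<rho> \<rho>' x"
    using rho_range by (simp add: fisher_weight_nonneg)
  obtain x\<^sub>0 where "x\<^sub>0 \<in> A" "\<rho>' x\<^sub>0 \<noteq> 0"
    using informative by blast
  then have w_pos: "0 < ?w x\<^sub>0"
    using rho_range fisher_weight_pos[of \<rho> x\<^sub>0 \<rho>'] by simp
  have gram_max: "direction_gram N (\<lambda>k. pi * real (k - 1) / real N) = (real N)\<^sup>2 / 4"
    using \<open>N > 1\<close> by (rule direction_gram_equiangular)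
  have "(\<forall>\<theta>'. \<forall>r'\<in>A. detI \<rho> N s r' \<theta>' \<le> detI \<rho> N s r \<theta>) \<longleftrightarrow>
      (\<forall>\<theta>'\<in>UNIV. \<forall>r'\<in>A. ?w r' * direction_gram N \<theta>' \<le> ?w r * direction_gram N \<theta>)"
    using detI \<open>r \<in> A\<close> by simp
  also have "\<dots> \<longleftrightarrow> direction_gram N \<theta> = (real N)\<^sup>2 / 4 \<and> (\<forall>r'\<in>A. ?w r' \<le> ?w r)"
    using w_pos gram_max \<open>x\<^sub>0 \<in> A\<close> \<open>r \<in> A\<close> \<open>N > 1\<close> direction_gram_le
    by (intro product_maximizer_iff) auto
  also have "direction_gram N \<theta> = (real N)\<^sup>2 / 4 \<longleftrightarrow>
      (\<Sum>k\<in>{1..N}. cos (2 * \<theta> k)) = 0 \<and> (\<Sum>k\<in>{1..N}. sin (2 * \<theta> k)) = 0"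
    by (rule direction_gram_eq_max_iff)
  also have "(\<forall>r'\<in>A. ?w r' \<le> ?w r) \<longleftrightarrow> r \<in> argmax_on (fisher_weight \<rho> \<rho>') A"
    using argmax_on_power2[OF w_nonneg] \<open>r \<in> A\<close> unfolding argmax_on_def by blast
  finally show ?thesis
    by (simp only: conj_assoc)
qed

lemma detI_radial_maximizer_iff:
  assumes "A \<subseteq> {0<..}"
    and rho_range: "\<forall>x\<in>A. 0 < \<rho> x \<and> \<rho> x < 1"
    and rho_deriv: "\<forall>x\<in>A. (\<rho> has_real_derivative \<rho>' x) (at x)"
    and "k \<in> {1..N}" and "m \<in> {1..N}" and "sin (\<theta> k - \<theta> m) \<noteq> 0" and "r \<in> A"
  shows "(\<forall>r'\<in>A. detI \<rho> N s r' \<theta> \<le> detI \<rho> N s r \<theta>) \<longleftrightarrow> r \<in> argmax_on (fisher_weight \<rho> \<rho>') A"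
proof -
  have detI: "detI \<rho> N s x \<theta> = (fisher_weight \<rho> \<rho>' x)\<^sup>2 * direction_gram N \<theta>" if "x \<in> A" for x
    using that assms(1) rho_deriv by (intro detI_eq) auto
  have "0 < direction_gram N \<theta>"
    using assms(4-6) by (rule direction_gram_pos)
  then have "(\<forall>r'\<in>A. detI \<rho> N s r' \<theta> \<le> detI \<rho> N s r \<theta>) \<longleftrightarrow>
      r \<in> argmax_on (\<lambda>x. (fisher_weight \<rho> \<rho>' x)\<^sup>2) A"
    using detI \<open>r \<in> A\<close> unfolding argmax_on_def by auto
  also have "\<dots> \<longleftrightarrow> r \<in> argmax_on (fisher_weight \<rho> \<rho>') A"
    using rho_range fisher_weight_nonneg by (simp add: argmax_on_power2)
  finally show ?thesis .
qed

theorem theorem5: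
  fixes \<rho> \<rho>' :: "real \<Rightarrow> real" and S :: "(real^2) set" and s :: "real^2"
    and N :: nat and r\<^sub>1 r\<^sub>2 :: real
  assumes "s \<in> S"
    and "N \<ge> 2"
    and rho_range: "\<forall>x\<ge>0. 0 < \<rho> x \<and> \<rho> x < 1"
    and rho_deriv: "\<forall>x\<ge>0. (\<rho> has_real_derivative \<rho>' x) (at x within {0..})"
    and rho'_cont: "continuous_on {0..} \<rho>'"
    and "0 < r\<^sub>1" and "r\<^sub>1 \<le> r\<^sub>2"
  shows
    "(\<forall>r>0. \<rho>' r \<noteq> 0 \<longrightarrow>
        (\<forall>\<theta>. (\<forall>\<theta>'. detI \<rho> N s r \<theta>' \<le> detI \<rho> N s r \<theta>) \<longleftrightarrow>
              ((\<Sum>k\<in>{1..N}. cos (2 * \<theta> k)) = 0 \<and> (\<Sum>k\<in>{1..N}. sin (2 * \<theta> k)) = 0)))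
   \<and> (\<forall>\<theta>. (\<exists>k\<in>{1..N}. \<exists>m\<in>{1..N}. sin (\<theta> k - \<theta> m) \<noteq> 0) \<longrightarrow>
        (\<forall>r\<in>{r\<^sub>1..r\<^sub>2}. (\<forall>r'\<in>{r\<^sub>1..r\<^sub>2}. detI \<rho> N s r' \<theta> \<le> detI \<rho> N s r \<theta>) \<longleftrightarrow>
              r \<in> argmax_on (\<lambda>x. (\<rho>' x)\<^sup>2 / (\<rho> x * (1 - \<rho> x))) {r\<^sub>1..r\<^sub>2}))
   \<and> ((\<exists>x\<in>{r\<^sub>1..r\<^sub>2}. \<rho>' x \<noteq> 0) \<longrightarrow>
        (\<forall>\<theta>. \<forall>r\<in>{r\<^sub>1..r\<^sub>2}.
           (\<forall>\<theta>'. \<forall>r'\<in>{r\<^sub>1..r\<^sub>2}. detI \<rho> N s r' \<theta>' \<le> detI \<rho> N s r \<theta>) \<longleftrightarrow>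
           ((\<Sum>k\<in>{1..N}. cos (2 * \<theta> k)) = 0 \<and> (\<Sum>k\<in>{1..N}. sin (2 * \<theta> k)) = 0
            \<and> r \<in> argmax_on (\<lambda>x. (\<rho>' x)\<^sup>2 / (\<rho> x * (1 - \<rho> x))) {r\<^sub>1..r\<^sub>2})))"
proof -
  have weight: "(\<lambda>x. (\<rho>' x)\<^sup>2 / (\<rho> x * (1 - \<rho> x))) = fisher_weight \<rho> \<rho>'"
    by (simp add: fun_eq_iff fisher_weight_def)
  have range: "\<forall>x\<in>A. 0 < \<rho> x \<and> \<rho> x < 1" if "A \<subseteq> {0<..}" for A
    using rho_range that by auto
  have deriv: "\<forall>x\<in>A. (\<rho> has_real_derivative \<rho>' x) (at x)" if "A \<subseteq> {0<..}" for A
    using rho_deriv that by (auto intro!: has_real_derivative_at_within_Ici[of _ _ _ 0])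
  have radii: "{r\<^sub>1..r\<^sub>2} \<subseteq> {0<..}"
    using \<open>0 < r\<^sub>1\<close> by auto
  have "N > 1"
    using \<open>N \<ge> 2\<close> by simp
  show ?thesis
    unfolding weight
  proof (intro conjI allI impI ballI)
    fix r :: real and \<theta> :: "nat \<Rightarrow> real" assume "r > 0" "\<rho>' r \<noteq> 0"
    moreover from \<open>r > 0\<close> have "{r} \<subseteq> {0<..}"
      by simp
    ultimately show "(\<forall>\<theta>'. detI \<rho> N s r \<theta>' \<le> detI \<rho> N s r \<theta>) \<longleftrightarrow>
        (\<Sum>k\<in>{1..N}. cos (2 * \<theta> k)) = 0 \<and> (\<Sum>k\<in>{1..N}. sin (2 * \<theta> k)) = 0"
      using detI_maximizer_iff[OF \<open>N > 1\<close> _ range deriv, of "{r}" r s \<theta>]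
      by (simp add: argmax_on_def)
  next
    fix \<theta> :: "nat \<Rightarrow> real" and r :: real assume "\<exists>k\<in>{1..N}. \<exists>m\<in>{1..N}. sin (\<theta> k - \<theta> m) \<noteq> 0" "r \<in> {r\<^sub>1..r\<^sub>2}"
    then show "(\<forall>r'\<in>{r\<^sub>1..r\<^sub>2}. detI \<rho> N s r' \<theta> \<le> detI \<rho> N s r \<theta>) \<longleftrightarrow>
        r \<in> argmax_on (fisher_weight \<rho> \<rho>') {r\<^sub>1..r\<^sub>2}"
      using detI_radial_maximizer_iff[OF radii range[OF radii] deriv[OF radii]] by blast
  next
    fix \<theta> :: "nat \<Rightarrow> real" and r :: real assume "\<exists>x\<in>{r\<^sub>1..r\<^sub>2}. \<rho>' x \<noteq> 0" "r \<in> {r\<^sub>1..r\<^sub>2}"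
    then show "(\<forall>\<theta>'. \<forall>r'\<in>{r\<^sub>1..r\<^sub>2}. detI \<rho> N s r' \<theta>' \<le> detI \<rho> N s r \<theta>) \<longleftrightarrow>
        (\<Sum>k\<in>{1..N}. cos (2 * \<theta> k)) = 0 \<and> (\<Sum>k\<in>{1..N}. sin (2 * \<theta> k)) = 0
        \<and> r \<in> argmax_on (fisher_weight \<rho> \<rho>') {r\<^sub>1..r\<^sub>2}"
      by (rule detI_maximizer_iff[OF \<open>N > 1\<close> radii range[OF radii] deriv[OF radii]])
  qed
qed

end
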